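(* Let $q$ be a prime power, $l\ge1$, $t=q^l$, and $L_6=\{\alpha\in GF(t^2):\ \alpha^{t+1}+1\ne0\}=\{\alpha_1,\dots,\alpha_n\}$. For integers $e\ge0$, $s\ge1$ let $R(e,s)\in GF(t^2)^n$ be the row vector with $k$-th entry $\alpha_k^e/(\alpha_k^{t+1}+1)^s$ (with $0^0=1$). Let $f\in\{1,\dots,q-1\}$ and $c\in GF(q)^n$. If $c\cdot R(t-ft/q,\,1)=0$ and $c\cdot R((f-j)t+q-j,\,q-1)=0$ for all $j=1,\dots,f$, then $c\cdot R(ft/q+1,\,1)=0$. (That is, the row $R(ft/q+1,1)$ of the parity-check matrix is obtained, for $q$-ary codes, from the row $R(t-ft/q,1)$ and the auxiliary rows $R((f-j)t+q-j,q-1)$, $j=1,\dots,f$.)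
   Context: Here $u\cdot v=\sum_k u_kv_k$. In the paper these rows belong to parity-check matrices of the $q$-ary Goppa codes $\Gamma(L_6,(x^{t+1}+1)^j)$, which consist of $c\in GF(q)^n$ with $c\cdot R(e,s)=0$ for $1\le s\le j$, $0\le e\le t$. *)

theory Defs
  imports "HOL-Computational_Algebra.Primes" "HOL-Library.Cardinality"
begin

text \<open>The ambient field GF(t^2) is a finite field type 'a with CARD('a) = t^2.
  L6 = set of alpha with alpha^(t+1) + 1 \<noteq> 0.\<close>
definition L6 :: "nat \<Rightarrow> ('a::{field,finite}) set" where
  "L6 t = {\<alpha>. \<alpha> ^ (t + 1) + 1 \<noteq> 0}"

definition GFq :: "nat \<Rightarrow> ('a::{field,finite}) set" where
  "GFq q = {x. x ^ q = x}"

text \<open>Row vector R(e,s), indexed by k < n via an enumeration alpha of L6.\<close>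
definition Rrow :: "nat \<Rightarrow> (nat \<Rightarrow> 'a::{field,finite}) \<Rightarrow> nat \<Rightarrow> nat \<Rightarrow> nat \<Rightarrow> 'a" where
  "Rrow t \<alpha> e s k = \<alpha> k ^ e / (\<alpha> k ^ (t + 1) + 1) ^ s"

definition dotp :: "nat \<Rightarrow> (nat \<Rightarrow> 'a::comm_ring_1) \<Rightarrow> (nat \<Rightarrow> 'a) \<Rightarrow> 'a" where
  "dotp n u v = (\<Sum>k<n. u k * v k)"

end

theory Submission
  imports Defs "HOL-Number_Theory.Residues"
begin

text \<open>Put \<open>N = \<alpha>^(t+1) + 1\<close>; it is nonzero on \<open>L6\<close> and satisfies \<open>N^t = N\<close>.
  As the entries of \<open>c\<close> lie in \<open>GF(q)\<close>, the Frobenius map \<open>x \<mapsto> x^(q^i)\<close> commutes with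
  \<open>c \<cdot> _\<close>, so \<open>c \<cdot> R(e,s) = 0\<close> iff \<open>c \<cdot> R(e q^i, s q^i) = 0\<close>, and \<open>N^t = N\<close> lets
  one drop the factor \<open>t = q^l\<close> from the second index. With \<open>a_j = c \<cdot> R((f-j)t + q - j, q)\<close>
  this turns the hypothesis on \<open>R(t - ft/q, 1)\<close> into \<open>a_f = 0\<close> and the claim into \<open>a_0 = 0\<close>.
  Multiplying numerator and denominator by \<open>N\<close> gives \<open>R(e, q-1) = R(e+t+1, q) + R(e, q)\<close>,
  so the auxiliary rows say \<open>a_(j-1) + a_j = 0\<close>, and \<open>a_0 = 0\<close> follows by telescoping.\<close>

text \<open>The library's \<open>finite_field_power_card_eq_same\<close> needs sort \<open>finite_field\<close>, which a type
  variable of sort \<open>{field,finite}\<close> does not have.\<close>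
lemma power_card_eq_self:
  fixes x :: "'a::{field,finite}"
  shows "x ^ CARD('a) = x"
proof (cases "x = 0")
  case False
  define S where "S = (UNIV - {0} :: 'a set)"
  have "(*) x ` S = S"
  proof
    show "S \<subseteq> (*) x ` S"
    proof
      fix y assume "y \<in> S"
      then have "y = x * (y / x)" and "y / x \<in> S"
        using False by (simp_all add: S_def)
      then show "y \<in> (*) x ` S" by blast
    qed
  qed (use False in \<open>auto simp: S_def\<close>)
  then have "prod id S = (\<Prod>y\<in>S. x * y)"
    using prod.reindex[of "(*) x" S id] False by (simp add: inj_on_def)
  also have "\<dots> = x ^ card S * prod id S"
    by (simp add: prod.distrib)
  finally have "x ^ card S = 1"
    by (simp add: S_def)
  moreover have "CARD('a) = Suc (card S)"
    using zero_less_card_finite[where 'a='a] by (simp add: S_def card_Diff_singleton)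
  ultimately show ?thesis
    by simp
qed (simp add: zero_less_card_finite)

lemma CHAR_eq_if_CARD_eq_prime_power:
  assumes "prime p" and "CARD('a::{idom,finite}) = p ^ k"
  shows "CHAR('a) = p"
proof -
  have char_prime: "prime CHAR('a)"
    by (rule prime_CHAR_semidom) (simp add: finite_imp_CHAR_pos)
  have "CHAR('a) dvd p ^ k"
    using CHAR_dvd_CARD[where 'a='a] assms(2) by simp
  then have "CHAR('a) dvd p"
    using char_prime prime_dvd_power by blast
  then show ?thesis
    using char_prime assms(1) by (simp add: primes_dvd_imp_eq)
qed

lemma norm_add_1_power_eq_self:
  fixes x :: "'a::{field,finite}"
  assumes "prime CHAR('a)" and "t = CHAR('a) ^ k" and "CARD('a) = t ^ 2"
  shows "(x ^ (t + 1) + 1) ^ t = x ^ (t + 1) + 1"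
proof -
  have "(x ^ (t + 1)) ^ t = x ^ CARD('a) * x ^ t"
    by (simp add: assms(3) power2_eq_square power_add power_mult_distrib flip: power_mult)
  then have "(x ^ (t + 1)) ^ t = x ^ (t + 1)"
    by (simp add: power_card_eq_self mult.commute)
  then show ?thesis
    using assms by (simp add: freshmans_dream')
qed

lemma dotp_cong: "(\<And>k. k < n \<Longrightarrow> u k = v k) \<Longrightarrow> dotp n c u = dotp n c v"
  unfolding dotp_def by (rule sum.cong) auto

lemma dotp_add: "dotp n c (\<lambda>k. u k + v k) = dotp n c u + dotp n c v"
  unfolding dotp_def by (simp add: distrib_left sum.distrib)

lemma dotp_power_Frobenius:
  fixes c v :: "nat \<Rightarrow> 'a::comm_ring_1"
  assumes "prime CHAR('a)" and "q = CHAR('a) ^ m" and "\<forall>k<n. c k ^ q = c k"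
  shows "dotp n c v ^ (q ^ i) = dotp n c (\<lambda>k. v k ^ (q ^ i))"
proof -
  have c_fixed: "c k ^ (q ^ i) = c k" if "k < n" for k
    by (induction i) (use assms(3) that in \<open>simp_all add: power_mult\<close>)
  have "dotp n c v ^ (q ^ i) = (\<Sum>k<n. (c k * v k) ^ (q ^ i))"
    unfolding dotp_def using assms(1,2)
    by (intro freshmans_dream_sum'[where n = "m * i"]) (simp_all add: power_mult)
  also have "\<dots> = dotp n c (\<lambda>k. v k ^ (q ^ i))"
    unfolding dotp_def by (rule sum.cong) (simp_all add: power_mult_distrib c_fixed)
  finally show ?thesis .
qed

lemma dotp_eq_0_iff_Frobenius:
  fixes c v :: "nat \<Rightarrow> 'a::idom"
  assumes "prime CHAR('a)" and "q = CHAR('a) ^ m" and "\<forall>k<n. c k ^ q = c k"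
  shows "dotp n c v = 0 \<longleftrightarrow> dotp n c (\<lambda>k. v k ^ (q ^ i)) = 0"
proof -
  have "CHAR('a) > 0"
    using assms(1) by (rule prime_gt_0_nat)
  then have "dotp n c v = 0 \<longleftrightarrow> dotp n c v ^ (q ^ i) = 0"
    using assms(2) by simp
  also have "dotp n c v ^ (q ^ i) = dotp n c (\<lambda>k. v k ^ (q ^ i))"
    by (rule dotp_power_Frobenius[OF assms])
  finally show ?thesis .
qed

lemma Rrow_power: "Rrow t \<alpha> e s k ^ m = Rrow t \<alpha> (e * m) (s * m) k"
  unfolding Rrow_def power_divide power_mult ..

lemma dotp_Rrow_eq_0_iff_Frobenius:
  fixes c :: "nat \<Rightarrow> 'a::{field,finite}"
  assumes "prime CHAR('a)" and "q = CHAR('a) ^ m" and "\<forall>k<n. c k ^ q = c k"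
  shows "dotp n c (Rrow t \<alpha> e s) = 0 \<longleftrightarrow> dotp n c (Rrow t \<alpha> (e * q ^ i) (s * q ^ i)) = 0"
  using dotp_eq_0_iff_Frobenius[OF assms, of "Rrow t \<alpha> e s" i] by (simp add: Rrow_power)

lemma Rrow_denominator_power:
  assumes "(\<alpha> k ^ (t + 1) + 1) ^ t = \<alpha> k ^ (t + 1) + 1"
  shows "Rrow t \<alpha> e (s * t) k = Rrow t \<alpha> e s k"
proof -
  have "(\<alpha> k ^ (t + 1) + 1) ^ (s * t) = (\<alpha> k ^ (t + 1) + 1) ^ s"
    by (metis assms mult.commute power_mult)
  then show ?thesis
    by (simp add: Rrow_def)
qed

lemma dotp_Rrow_eq_0_iff_numerator_power:
  fixes c \<alpha> :: "nat \<Rightarrow> 'a::{field,finite}"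
  assumes "prime CHAR('a)" and "q = CHAR('a) ^ m" and "\<forall>k<n. c k ^ q = c k"
    and "t = q ^ l" and "\<And>k. (\<alpha> k ^ (t + 1) + 1) ^ t = \<alpha> k ^ (t + 1) + 1"
  shows "dotp n c (Rrow t \<alpha> e s) = 0 \<longleftrightarrow> dotp n c (Rrow t \<alpha> (e * t) s) = 0"
proof -
  have "dotp n c (Rrow t \<alpha> (e * t) (s * t)) = dotp n c (Rrow t \<alpha> (e * t) s)"
    using assms(5) by (intro dotp_cong Rrow_denominator_power)
  then show ?thesis
    using dotp_Rrow_eq_0_iff_Frobenius[OF assms(1-3), of t \<alpha> e s l] assms(4) by simp
qed

lemma Rrow_split:
  assumes "\<alpha> k ^ (t + 1) + 1 \<noteq> 0"
  shows "Rrow t \<alpha> e s k = Rrow t \<alpha> (e + (t + 1)) (Suc s) k + Rrow t \<alpha> e (Suc s) k"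
proof -
  let ?N = "\<alpha> k ^ (t + 1) + 1"
  have "Rrow t \<alpha> (e + (t + 1)) (Suc s) k + Rrow t \<alpha> e (Suc s) k
          = (\<alpha> k ^ (e + (t + 1)) + \<alpha> k ^ e) / ?N ^ Suc s"
    by (simp only: Rrow_def add_divide_distrib)
  also have "\<dots> = \<alpha> k ^ e * ?N / (?N ^ s * ?N)"
    by (simp add: power_add distrib_left mult.commute)
  also have "\<dots> = Rrow t \<alpha> e s k"
    using assms by (simp add: Rrow_def)
  finally show ?thesis ..
qed

lemma dotp_Rrow_split:
  assumes "\<forall>k<n. \<alpha> k ^ (t + 1) + 1 \<noteq> 0"
  shows "dotp n c (Rrow t \<alpha> e s)
           = dotp n c (Rrow t \<alpha> (e + (t + 1)) (Suc s)) + dotp n c (Rrow t \<alpha> e (Suc s))"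
  unfolding dotp_add[symmetric] using assms by (intro dotp_cong Rrow_split) simp

lemma telescoping_eq_0:
  fixes a :: "nat \<Rightarrow> 'a::ab_group_add"
  assumes "\<And>j. 1 \<le> j \<Longrightarrow> j \<le> f \<Longrightarrow> a (j - 1) + a j = 0" and "a f = 0"
  shows "a 0 = 0"
proof -
  have "a (f - i) = 0" if "i \<le> f" for i
    using that
  proof (induction i)
    case 0
    show ?case using assms(2) by simp
  next
    case (Suc i)
    then show ?case
      using assms(1)[of "f - i"] by simp
  qed
  from this[of f] show ?thesis
    by simp
qed

lemma Rrow_exponent_shift:
  fixes j f q t :: nat
  assumes "1 \<le> j" and "j \<le> f" and "f \<le> q - 1"
  shows "(f - j) * t + q - j + (t + 1) = (f - (j - 1)) * t + q - (j - 1)"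
proof -
  have "j \<le> q"
    using assms by linarith
  obtain d r where "f = j + d" and "q = j + r"
    using le_Suc_ex[OF \<open>j \<le> f\<close>] le_Suc_ex[OF \<open>j \<le> q\<close>] by blast
  then show ?thesis
    using assms(1) by simp
qed

theorem lemma8:
  fixes q l t n f :: nat and \<alpha> :: "nat \<Rightarrow> 'a::{field,finite}" and c :: "nat \<Rightarrow> 'a"
  assumes q_pp: "\<exists>p m. prime p \<and> m \<ge> 1 \<and> q = p ^ m"
    and l: "l \<ge> 1"
    and t: "t = q ^ l"
    and card: "CARD('a) = t ^ 2"
    and enum: "bij_betw \<alpha> {..<n} (L6 t)"
    and f: "1 \<le> f" "f \<le> q - 1"
    and c: "\<forall>k<n. c k \<in> GFq q"
    and h1: "dotp n c (Rrow t \<alpha> (t - f * t div q) 1) = 0"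
    and h2: "\<forall>j\<in>{1..f}. dotp n c (Rrow t \<alpha> ((f - j) * t + q - j) (q - 1)) = 0"
  shows "dotp n c (Rrow t \<alpha> (f * t div q + 1) 1) = 0"
proof -
  obtain p m where p: "prime p" and q: "q = p ^ m"
    using q_pp by blast
  have char: "CHAR('a) = p"
    using card p by (intro CHAR_eq_if_CARD_eq_prime_power[of p "m * l * 2"])
      (simp_all add: t q power_mult)
  then have char_prime: "prime CHAR('a)" and q_char: "q = CHAR('a) ^ m"
    using p q by simp_all
  have c_fixed: "\<forall>k<n. c k ^ q = c k"
    using c by (simp add: GFq_def)
  have N_fixed: "(\<alpha> k ^ (t + 1) + 1) ^ t = \<alpha> k ^ (t + 1) + 1" for k
    using char_prime card by (intro norm_add_1_power_eq_self[where k = "m * l"])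
      (simp_all add: char t q power_mult)
  have N_nonzero: "\<forall>k<n. \<alpha> k ^ (t + 1) + 1 \<noteq> 0"
    using enum by (auto simp: bij_betw_def L6_def)
  note Frobenius = dotp_Rrow_eq_0_iff_Frobenius[OF char_prime q_char c_fixed, where i = 1]
  note Frobenius_t = dotp_Rrow_eq_0_iff_numerator_power[OF char_prime q_char c_fixed t N_fixed]
  have tu: "t = q * q ^ (l - 1)" and "q \<ge> 2"
    using l t f by (simp_all flip: power_Suc)
  define a where "a j = dotp n c (Rrow t \<alpha> ((f - j) * t + q - j) q)" for j
  have "(t - f * t div q) * q = (q - f) * t"
    by (subst (1 2 3) tu) (simp add: diff_mult_distrib mult_ac)
  then have "a f = 0"
    using h1 Frobenius[where e = "t - f * t div q" and s = 1] Frobenius_t[where e = "q - f" and s = q]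
    by (simp add: a_def)
  moreover have "a (j - 1) + a j = 0" if "1 \<le> j" "j \<le> f" for j
    using h2 that dotp_Rrow_split[OF N_nonzero, of c "(f - j) * t + q - j" "q - 1"] \<open>q \<ge> 2\<close>
      Rrow_exponent_shift[OF that f(2)] by (simp add: a_def)
  ultimately have "a 0 = 0"
    by (rule telescoping_eq_0[rotated])
  moreover have "(f * t div q + 1) * q = f * t + q"
    by (subst (1 2) tu) (simp add: algebra_simps)
  ultimately show ?thesis
    using Frobenius[where e = "f * t div q + 1" and s = 1] by (simp add: a_def add.commute)
qed

end
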